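(* Let $d\ge 1$ and $\vec\gamma=(\gamma_1,\dots,\gamma_d)\in\mathbb{Z}^d$. Let $g\colon\mathbb{C}\to\mathbb{C}$ be holomorphic with a simple zero $\alpha\neq 0$, with expansion $g(z)=\sum_{k\ge 1}c_k(z-\alpha)^k$, $c_1\neq 0$; fix a point of $L$ over $\alpha$, also denoted $\alpha$. For $\vec a\in\mathbb{C}^d$ let $f(z;\vec a)=g(z)+\sum_{i=1}^d a_i z^{\gamma_i}$ for $z\in L$. Suppose that for some neighborhood $U\subset\mathbb{C}^d$ of $\vec 0$ there is a smooth map $\phi\colon U\to L$ with $f(\phi(\vec a);\vec a)=0$ for all $\vec a\in U$ and $\phi(\vec 0)=\alpha$. Then for every $\vec n=(n_1,\dots,n_d)\in\mathbb{Z}_{\ge0}^d$ with $\Sigma\vec n:=\sum_i n_i\ge 1$, \[ \frac{\partial(\phi,\vec n)}{\prod_{i=1}^d n_i!}\in \alpha^{\vec n\cdot\vec\gamma}\,\mathbb{Z}\big[\alpha^{-1},c_1^{-1},c_2,c_3,\dots,c_{\Sigma\vec n}\big], \] i.e. it equals $\alpha^{\vec n\cdot\vec\gamma}$ times a polynomial with integer coefficients in $\alpha^{-1},c_1^{-1},c_2,\dots,c_{\Sigma\vec n}$, where $\partial(\phi,\vec n)=\prod_{i=1}^d\big(\frac{\partial}{\partial a_i}\big)^{n_i}\phi(\vec a)\big|_{\vec a=\vec 0}$ and $\vec n\cdot\vec\gamma=\sum_i n_i\gamma_i$.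
   Context: $L$ is the Riemann surface of the logarithm, parametrized by triples $(r,\theta,n)$ with $r>0$, $\theta\in(-\pi,\pi]$, $n\in\mathbb{Z}$; for $z=(r,\theta,n)\in L$ and $\gamma\in\mathbb{C}$, $z^\gamma=e^{\gamma\ln r+i\gamma\theta+2\pi i n\gamma}$. $g(z)$ for $z\in L$ near $\alpha$ means $g(z^1)$, and derivatives of $\phi$ are taken in the local complex coordinate $z\mapsto z^1$ near $\alpha$. *)

theory Defs
  imports "HOL-Analysis.Analysis"
begin

definition cpartial :: "'d::finite \<Rightarrow> (complex^'d \<Rightarrow> complex) \<Rightarrow> complex^'d \<Rightarrow> complex" where
  "cpartial i f a = deriv (\<lambda>z. f (\<chi> j. if j = i then z else a $ j)) (a $ i)"

definition mixed_partial :: "nat^'d::finite \<Rightarrow> (complex^'d \<Rightarrow> complex) \<Rightarrow> complex^'d \<Rightarrow> complex" where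
  "mixed_partial n f = foldr (\<lambda>i h. (cpartial i ^^ (n $ i)) h)
      (SOME xs. set xs = (UNIV :: 'd set) \<and> distinct xs) f"

definition cholomorphic_on :: "(complex^'d::finite \<Rightarrow> complex) \<Rightarrow> (complex^'d) set \<Rightarrow> bool" where
  "cholomorphic_on f U \<longleftrightarrow> (\<forall>a\<in>U. \<exists>D. (f has_derivative D) (at a) \<and>
       (\<forall>c x. D (c *s x) = c * D x))"

text \<open>Values at x(0),...,x(N) of polynomials with integer coefficients in N+1 variables,
  i.e. the ring Z[x 0, ..., x N].\<close>
definition int_poly_vals :: "nat \<Rightarrow> (nat \<Rightarrow> complex) \<Rightarrow> complex set" where
  "int_poly_vals N x = {z. \<exists>(M :: (nat \<Rightarrow> nat) set) (coef :: (nat \<Rightarrow> nat) \<Rightarrow> int).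
      finite M \<and> z = (\<Sum>m\<in>M. of_int (coef m) * (\<Prod>j\<le>N. x j ^ m j))}"

end

theory Submission
  imports Defs "HOL-Complex_Analysis.Complex_Analysis"
begin

text \<open>The root \<open>\<psi>\<close> of \<open>g u + (\<Sum>j. a\<^sub>j u\<^bsup>\<gamma>\<^sub>j\<^esup>) = 0\<close> is studied one
  coordinate \<open>a\<^sub>i\<close> at a time, with Taylor coefficients of compositions computed by composing
  power series.  The \<open>k\<close>-th Taylor coefficient in \<open>a\<^sub>i\<close> of the defining equation reads
  \<open>dF \<cdot> (k-th coefficient of \<psi>) + rest = 0\<close>, where \<open>dF\<close> is the \<open>u\<close>-derivative of the
  equation and \<open>rest\<close> involves only lower coefficients of \<open>\<psi>\<close>.  By induction the
  coefficients of \<open>\<psi>\<close>, and then all normalised mixed partials, stay in a class of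
  admissible functions: integer polynomials in \<open>\<psi>\<^sup>\<plusminus>\<^sup>1\<close>, the coordinates,
  \<open>1 / dF\<close> and \<open>g\<^bsup>(m)\<^esup>(\<psi>) / m!\<close>, graded by a weight in which \<open>\<psi>\<close> counts \<open>1\<close> and
  \<open>a\<^sub>j\<close> counts \<open>-\<gamma>\<^sub>j\<close>; a \<open>k\<close>-th coefficient in \<open>a\<^sub>i\<close> raises the weight by
  \<open>k \<gamma>\<^sub>i\<close> and the largest \<open>m\<close> by at most \<open>k\<close>.  At \<open>a = 0\<close> we have \<open>\<psi> = \<alpha>\<close> and
  \<open>dF = c\<^sub>1\<close>, so an admissible function of weight \<open>w\<close> takes a value in
  \<open>\<alpha>\<^sup>w \<int>[\<alpha>\<^sup>-\<^sup>1, c\<^sub>1\<^sup>-\<^sup>1, c\<^sub>2, \<dots>]\<close>.\<close>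

section \<open>Integer polynomial values\<close>

lemma int_poly_vals_monomial: "of_int c * (\<Prod>j\<le>N. x j ^ m j) \<in> int_poly_vals N x"
  unfolding int_poly_vals_def by (intro CollectI exI[of _ "{m}"] exI[of _ "\<lambda>_. c"]) simp

lemma int_poly_vals_of_int: "of_int c \<in> int_poly_vals N x"
  using int_poly_vals_monomial[where c=c and m="\<lambda>_. 0"] by simp

lemma int_poly_vals_var:
  assumes "k \<le> N"
  shows "x k \<in> int_poly_vals N x"
proof -
  have "(\<Prod>j\<le>N. x j ^ (if j = k then 1 else 0)) = x k"
    using assms by (simp add: if_distrib[of "\<lambda>e. x _ ^ e"] prod.delta' cong: if_cong)
  moreover have "of_int 1 * (\<Prod>j\<le>N. x j ^ (if j = k then 1 else 0)) \<in> int_poly_vals N x"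
    by (rule int_poly_vals_monomial)
  ultimately show ?thesis by simp
qed

lemma int_poly_vals_add:
  assumes "p \<in> int_poly_vals N x" "q \<in> int_poly_vals N x"
  shows "p + q \<in> int_poly_vals N x"
proof -
  obtain M1 c1 where M1: "finite M1" and p: "p = (\<Sum>m\<in>M1. of_int (c1 m) * (\<Prod>j\<le>N. x j ^ m j))"
    using assms(1) unfolding int_poly_vals_def by blast
  obtain M2 c2 where M2: "finite M2" and q: "q = (\<Sum>m\<in>M2. of_int (c2 m) * (\<Prod>j\<le>N. x j ^ m j))"
    using assms(2) unfolding int_poly_vals_def by blast
  define c where "c m = (if m \<in> M1 then c1 m else 0) + (if m \<in> M2 then c2 m else 0)" for m
  have "p = (\<Sum>m\<in>M1 \<union> M2. of_int (if m \<in> M1 then c1 m else 0) * (\<Prod>j\<le>N. x j ^ m j))"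
    unfolding p using M1 M2 by (intro sum.mono_neutral_cong_left) auto
  moreover have "q = (\<Sum>m\<in>M1 \<union> M2. of_int (if m \<in> M2 then c2 m else 0) * (\<Prod>j\<le>N. x j ^ m j))"
    unfolding q using M1 M2 by (intro sum.mono_neutral_cong_left) auto
  ultimately have "p + q = (\<Sum>m\<in>M1 \<union> M2. of_int (c m) * (\<Prod>j\<le>N. x j ^ m j))"
    by (simp add: c_def sum.distrib[symmetric] distrib_right)
  thus ?thesis unfolding int_poly_vals_def using M1 M2 by blast
qed

lemma int_poly_vals_sum:
  "finite I \<Longrightarrow> (\<And>i. i \<in> I \<Longrightarrow> t i \<in> int_poly_vals N x) \<Longrightarrow> sum t I \<in> int_poly_vals N x"
  by (induction I rule: finite_induct)
    (auto intro: int_poly_vals_add int_poly_vals_of_int[of 0, simplified])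

lemma int_poly_vals_mult:
  assumes "p \<in> int_poly_vals N x" "q \<in> int_poly_vals N x"
  shows "p * q \<in> int_poly_vals N x"
proof -
  obtain M1 c1 where M1: "finite M1" and p: "p = (\<Sum>m\<in>M1. of_int (c1 m) * (\<Prod>j\<le>N. x j ^ m j))"
    using assms(1) unfolding int_poly_vals_def by blast
  obtain M2 c2 where M2: "finite M2" and q: "q = (\<Sum>m\<in>M2. of_int (c2 m) * (\<Prod>j\<le>N. x j ^ m j))"
    using assms(2) unfolding int_poly_vals_def by blast
  have "p * q = (\<Sum>m1\<in>M1. \<Sum>m2\<in>M2. of_int (c1 m1 * c2 m2) * (\<Prod>j\<le>N. x j ^ (m1 j + m2 j)))"
    unfolding p q sum_distrib_right sum_distrib_left
    by (subst sum.swap) (simp add: power_add prod.distrib algebra_simps)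
  also have "\<dots> \<in> int_poly_vals N x"
    using M1 M2 by (intro int_poly_vals_sum int_poly_vals_monomial)
  finally show ?thesis .
qed

lemma int_poly_vals_power: "p \<in> int_poly_vals N x \<Longrightarrow> p ^ n \<in> int_poly_vals N x"
  by (induction n) (auto intro: int_poly_vals_mult int_poly_vals_of_int[of 1, simplified])

section \<open>Power series expansions\<close>

lemma fps_expansion_eqI':
  assumes "(\<lambda>x. f (z + x)) has_fps_expansion F"
  shows "fps_expansion f z = F"
proof -
  have "fps_expansion f z = fps_expansion (f \<circ> (\<lambda>x. z + x)) 0"
    unfolding fps_expansion_def by (subst higher_deriv_shift_0) simp
  also have "\<dots> = F"
    using assms by (intro fps_expansion_eqI) (simp add: o_def)
  finally show ?thesis .
qed

lemma fps_expansion_add: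
  "f analytic_on {z} \<Longrightarrow> g analytic_on {z} \<Longrightarrow>
     fps_expansion (\<lambda>x. f x + g x) z = fps_expansion f z + fps_expansion g z"
  by (intro fps_expansion_eqI' has_fps_expansion_add analytic_at_imp_has_fps_expansion)

lemma fps_expansion_mult:
  "f analytic_on {z} \<Longrightarrow> g analytic_on {z} \<Longrightarrow>
     fps_expansion (\<lambda>x. f x * g x) z = fps_expansion f z * fps_expansion g z"
  by (intro fps_expansion_eqI' has_fps_expansion_mult analytic_at_imp_has_fps_expansion)

lemma fps_expansion_compose:
  assumes s: "s analytic_on {z}" and h: "h analytic_on {s z}"
  shows "fps_expansion (\<lambda>x. h (s x)) z = fps_expansion h (s z) oo (fps_expansion s z - fps_const (s z))"
proof (rule fps_expansion_eqI')
  have "((\<lambda>y. h (s z + y)) \<circ> (\<lambda>x. s (z + x) - s z)) has_fps_expansion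
          (fps_expansion h (s z) oo (fps_expansion s z - fps_const (s z)))"
    using s h by (intro has_fps_expansion_compose has_fps_expansion_diff
        analytic_at_imp_has_fps_expansion has_fps_expansion_const) (simp_all add: fps_expansion_def)
  thus "(\<lambda>x. h (s (z + x))) has_fps_expansion (fps_expansion h (s z) oo (fps_expansion s z - fps_const (s z)))"
    by (simp add: o_def)
qed

lemma fps_compose_nth_split_linear:
  fixes F G :: "'a::comm_ring_1 fps"
  assumes "1 \<le> k"
  shows "(F oo G) $ k = F $ 1 * G $ k + (\<Sum>r=2..k. F $ r * (G ^ r) $ k)"
proof -
  have "{0..k} = insert 0 (insert 1 {2..k})" using assms by auto
  thus ?thesis using assms by (simp add: fps_compose_nth)
qed

lemma higher_deriv_power_int:
  fixes u :: complex
  assumes "u \<noteq> 0"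
  shows "(deriv ^^ r) (\<lambda>v. v powi e) u = of_int (\<Prod>i<r. e - int i) * u powi (e - int r)"
  using assms
proof (induction r arbitrary: u)
  case (Suc r)
  have "\<forall>\<^sub>F v in nhds u. v \<noteq> 0"
    using Suc.prems by (rule t1_space_nhds)
  hence "\<forall>\<^sub>F v in nhds u. (deriv ^^ r) (\<lambda>v. v powi e) v = of_int (\<Prod>i<r. e - int i) * v powi (e - int r)"
    by eventually_elim (rule Suc.IH)
  hence "(deriv ^^ Suc r) (\<lambda>v. v powi e) u = deriv (\<lambda>v. of_int (\<Prod>i<r. e - int i) * v powi (e - int r)) u"
    by (simp add: deriv_cong_ev)
  also have "\<dots> = of_int (\<Prod>i<r. e - int i) * (of_int (e - int r) * u powi (e - int r - 1))"
    using Suc.prems by (intro DERIV_imp_deriv derivative_eq_intros) auto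
  finally show ?case by (simp add: algebra_simps)
qed simp

lemma gbinomial_of_int_in_Ints: "(of_int e :: 'a::field_char_0) gchoose r \<in> \<int>"
  by (simp flip: of_int_gbinomial)

lemma fps_expansion_power_int_nth:
  fixes u :: complex
  assumes "u \<noteq> 0"
  shows "fps_expansion (\<lambda>v. v powi e) u $ r = (of_int e gchoose r) * u powi (e - int r)"
proof -
  have "of_int (\<Prod>i<r. e - int i) = fact r * (of_int e gchoose r :: complex)"
    by (simp add: gbinomial_prod_rev atLeast0LessThan)
  thus ?thesis
    using assms by (simp add: fps_expansion_def higher_deriv_power_int)
qed

lemma fps_expansion_higher_deriv_nth:
  assumes "f holomorphic_on S" "open S" "u \<in> S"
  shows "fps_expansion (\<lambda>v. (deriv ^^ m) f v / fact m) u $ r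
           = of_nat ((m + r) choose r) * ((deriv ^^ (m + r)) f u / fact (m + r))"
proof -
  have "(deriv ^^ r) (\<lambda>v. inverse (fact m) * (deriv ^^ m) f v) u
          = inverse (fact m) * (deriv ^^ r) ((deriv ^^ m) f) u"
    using assms by (intro higher_deriv_cmult holomorphic_higher_deriv)
  also have "(deriv ^^ r) ((deriv ^^ m) f) = (deriv ^^ (m + r)) f"
    by (simp add: add.commute[of m r] funpow_add)
  finally have "fps_expansion (\<lambda>v. (deriv ^^ m) f v / fact m) u $ r
                  = (deriv ^^ (m + r)) f u / (fact r * fact m)"
    by (simp add: fps_expansion_def divide_inverse mult_ac)
  moreover have "fact r * fact m * ((m + r) choose r) = fact (m + r)"
    using binomial_fact_lemma[of r "m + r"] by simp
  hence "(fact (m + r) :: complex) = fact r * fact m * of_nat ((m + r) choose r)"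
    by (metis of_nat_fact of_nat_mult)
  ultimately show ?thesis
    by simp
qed

section \<open>Taylor coefficients along a coordinate\<close>

definition upd_coord :: "'a^'d::finite \<Rightarrow> 'd \<Rightarrow> 'a \<Rightarrow> 'a^'d" where
  "upd_coord a i z = (\<chi> j. if j = i then z else a $ j)"

lemma upd_coord_nth [simp]: "upd_coord a i z $ j = (if j = i then z else a $ j)"
  by (simp add: upd_coord_def)

lemma upd_coord_same [simp]: "upd_coord a i (a $ i) = a"
  by (simp add: vec_eq_iff)

lemma upd_coord_upd_coord [simp]: "upd_coord (upd_coord a i z) i z' = upd_coord a i z'"
  by (simp add: vec_eq_iff)

lemma continuous_on_upd_coord: "continuous_on UNIV (upd_coord a i)"
  unfolding upd_coord_def
proof (intro continuous_intros)
  show "continuous_on UNIV (\<lambda>z. if j = i then z else a $ j)" for j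
    by (cases "j = i") (simp_all add: continuous_on_id)
qed

lemma open_upd_coord_vimage: "open W \<Longrightarrow> open {z. upd_coord a i z \<in> W}"
  using open_vimage[OF _ continuous_on_upd_coord] by (simp add: vimage_def)

lemma eventually_upd_coord_in_open:
  "open W \<Longrightarrow> a \<in> W \<Longrightarrow> \<forall>\<^sub>F z in nhds (a $ i). upd_coord a i z \<in> W"
  using eventually_nhds_in_open[OF open_upd_coord_vimage] by fastforce

lemma bounded_linear_axis: "bounded_linear (axis i :: 'a::real_normed_vector \<Rightarrow> 'a^'d::finite)"
proof (rule bounded_linear_intro[where K=1])
  show "axis i (x + y) = axis i x + axis i y" "axis i (r *\<^sub>R x) = r *\<^sub>R axis i x" for r x y
    by (simp_all add: axis_def vec_eq_iff)
  show "norm (axis i x) \<le> norm x * 1" for x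
  proof -
    have "norm (axis i x) \<le> (\<Sum>j\<in>UNIV. norm (axis i x $ j))"
      unfolding norm_vec_def by (rule L2_set_le_sum) simp
    also have "\<dots> = norm x"
      by (simp add: axis_def if_distrib[of norm] cong: if_cong)
    finally show ?thesis by simp
  qed
qed

lemma has_derivative_upd_coord:
  "(upd_coord a i has_derivative axis i) (at (z :: 'a::real_normed_vector))"
proof -
  have upd: "upd_coord a i = (\<lambda>z. a + axis i (z - a $ i))"
    by (auto simp: axis_def vec_eq_iff)
  have "((\<lambda>z. z - a $ i) has_derivative (\<lambda>h. h)) (at z)"
    by (auto intro!: derivative_eq_intros)
  from bounded_linear.has_derivative[OF bounded_linear_axis this]
  have "((\<lambda>z. a + axis i (z - a $ i)) has_derivative (\<lambda>h. 0 + axis i h)) (at z)"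
    by (intro has_derivative_add has_derivative_const)
  thus ?thesis
    unfolding upd by simp
qed

lemma cpartial_eq: "cpartial i f a = deriv (\<lambda>z. f (upd_coord a i z)) (a $ i)"
  by (simp add: cpartial_def upd_coord_def)

lemma cholomorphic_on_slice_holomorphic:
  assumes "cholomorphic_on f U" "open U"
  shows "(\<lambda>z. f (upd_coord a i z)) holomorphic_on {z. upd_coord a i z \<in> U}"
proof (subst holomorphic_on_open[OF open_upd_coord_vimage[OF assms(2)]], intro ballI)
  fix z assume "z \<in> {z. upd_coord a i z \<in> U}"
  then obtain D where D: "(f has_derivative D) (at (upd_coord a i z))" "\<And>c x. D (c *s x) = c * D x"
    using assms(1) unfolding cholomorphic_on_def by blast
  have "((f \<circ> upd_coord a i) has_derivative (D \<circ> axis i)) (at z)"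
    by (rule diff_chain_at[OF has_derivative_upd_coord D(1)])
  moreover have "D \<circ> axis i = (*) (D (axis i 1))"
  proof
    fix h :: complex
    have "axis i h = h *s axis i 1" by (simp add: axis_def vec_eq_iff)
    thus "(D \<circ> axis i) h = D (axis i 1) * h" by (simp add: D(2))
  qed
  ultimately show "\<exists>f'. ((\<lambda>z. f (upd_coord a i z)) has_field_derivative f') (at z)"
    by (auto simp: has_field_derivative_def o_def)
qed

lemma cholomorphic_on_imp_continuous_on: "cholomorphic_on f U \<Longrightarrow> continuous_on U f"
  unfolding cholomorphic_on_def
  by (intro continuous_at_imp_continuous_on) (blast dest: has_derivative_continuous)

definition slice_analytic :: "'d::finite \<Rightarrow> (complex^'d \<Rightarrow> complex) \<Rightarrow> complex^'d \<Rightarrow> bool" where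
  "slice_analytic i f a \<longleftrightarrow> (\<lambda>z. f (upd_coord a i z)) analytic_on {a $ i}"

lemma cholomorphic_on_imp_slice_analytic:
  assumes "cholomorphic_on f U" "open U" "a \<in> U"
  shows "slice_analytic i f a"
  unfolding slice_analytic_def analytic_at using assms
  by (intro exI[of _ "{z. upd_coord a i z \<in> U}"])
    (simp add: open_upd_coord_vimage cholomorphic_on_slice_holomorphic)

lemma slice_analytic_const: "slice_analytic i (\<lambda>b. c) a"
  by (simp add: slice_analytic_def)

lemma slice_analytic_coord: "slice_analytic i (\<lambda>b. b $ j) a"
  by (cases "j = i") (simp_all add: slice_analytic_def analytic_on_ident)

lemma slice_analytic_add:
  "slice_analytic i f a \<Longrightarrow> slice_analytic i g a \<Longrightarrow> slice_analytic i (\<lambda>b. f b + g b) a"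
  unfolding slice_analytic_def by (rule analytic_on_add)

lemma slice_analytic_mult:
  "slice_analytic i f a \<Longrightarrow> slice_analytic i g a \<Longrightarrow> slice_analytic i (\<lambda>b. f b * g b) a"
  unfolding slice_analytic_def by (rule analytic_on_mult)

lemma slice_analytic_sum:
  "finite J \<Longrightarrow> (\<And>j. j \<in> J \<Longrightarrow> slice_analytic i (f j) a) \<Longrightarrow> slice_analytic i (\<lambda>b. \<Sum>j\<in>J. f j b) a"
  by (induction J rule: finite_induct) (auto intro: slice_analytic_add slice_analytic_const)

lemma slice_analytic_compose:
  "slice_analytic i s a \<Longrightarrow> h analytic_on {s a} \<Longrightarrow> slice_analytic i (\<lambda>b. h (s b)) a"
  unfolding slice_analytic_def
  using analytic_on_compose_gen[of "\<lambda>z. s (upd_coord a i z)" "{a $ i}" h "{s a}"] by (simp add: o_def)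

lemma slice_analytic_cong:
  assumes "slice_analytic i f a" "open W" "a \<in> W" "\<And>b. b \<in> W \<Longrightarrow> f b = g b"
  shows "slice_analytic i g a"
proof -
  have "\<forall>\<^sub>F z in nhds (a $ i). f (upd_coord a i z) = g (upd_coord a i z)"
    using eventually_upd_coord_in_open[OF assms(2,3)] by eventually_elim (use assms(4) in auto)
  thus ?thesis using assms(1) unfolding slice_analytic_def by (subst (asm) analytic_at_cong) auto
qed

definition taylor_coeff :: "'d::finite \<Rightarrow> nat \<Rightarrow> (complex^'d \<Rightarrow> complex) \<Rightarrow> complex^'d \<Rightarrow> complex" where
  "taylor_coeff i k f a = fps_expansion (\<lambda>z. f (upd_coord a i z)) (a $ i) $ k"

lemma taylor_coeff_eq_higher_deriv:
  "taylor_coeff i k f a = (deriv ^^ k) (\<lambda>z. f (upd_coord a i z)) (a $ i) / fact k"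
  by (simp add: taylor_coeff_def fps_expansion_def)

lemma funpow_cpartial_eq_higher_deriv:
  "(cpartial i ^^ k) f a = (deriv ^^ k) (\<lambda>z. f (upd_coord a i z)) (a $ i)"
proof (induction k arbitrary: f a)
  case (Suc k)
  have "(cpartial i ^^ Suc k) f a = deriv (\<lambda>z. (cpartial i ^^ k) f (upd_coord a i z)) (a $ i)"
    by (simp add: cpartial_eq)
  also have "(\<lambda>z. (cpartial i ^^ k) f (upd_coord a i z)) = (deriv ^^ k) (\<lambda>z. f (upd_coord a i z))"
    by (simp add: Suc)
  finally show ?case by simp
qed simp

lemma funpow_cpartial: "(cpartial i ^^ k) f a = fact k * taylor_coeff i k f a"
  by (simp add: funpow_cpartial_eq_higher_deriv taylor_coeff_eq_higher_deriv)

lemma taylor_coeff_0 [simp]: "taylor_coeff i 0 f = f"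
  by (simp add: fun_eq_iff taylor_coeff_eq_higher_deriv)

lemma taylor_coeff_const: "taylor_coeff i k (\<lambda>b. c) a = (if k = 0 then c else 0)"
  by (simp add: taylor_coeff_eq_higher_deriv)

lemma taylor_coeff_coord:
  "taylor_coeff i k (\<lambda>b. b $ j) a = (if k = 0 then a $ j else if k = 1 \<and> j = i then 1 else 0)"
  by (cases "j = i") (simp_all add: taylor_coeff_eq_higher_deriv)

lemma taylor_coeff_add:
  "slice_analytic i f a \<Longrightarrow> slice_analytic i g a \<Longrightarrow>
     taylor_coeff i k (\<lambda>b. f b + g b) a = taylor_coeff i k f a + taylor_coeff i k g a"
  unfolding slice_analytic_def taylor_coeff_def by (simp add: fps_expansion_add)

lemma taylor_coeff_sum:
  "finite J \<Longrightarrow> (\<And>j. j \<in> J \<Longrightarrow> slice_analytic i (f j) a) \<Longrightarrow>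
     taylor_coeff i k (\<lambda>b. \<Sum>j\<in>J. f j b) a = (\<Sum>j\<in>J. taylor_coeff i k (f j) a)"
  by (induction J rule: finite_induct)
    (simp_all add: taylor_coeff_const taylor_coeff_add slice_analytic_sum)

lemma taylor_coeff_mult:
  "slice_analytic i f a \<Longrightarrow> slice_analytic i g a \<Longrightarrow>
     taylor_coeff i k (\<lambda>b. f b * g b) a = (\<Sum>l=0..k. taylor_coeff i l f a * taylor_coeff i (k - l) g a)"
  unfolding slice_analytic_def taylor_coeff_def by (simp add: fps_expansion_mult fps_mult_nth)

lemma taylor_coeff_cmult:
  "slice_analytic i f a \<Longrightarrow> taylor_coeff i k (\<lambda>b. c * f b) a = c * taylor_coeff i k f a"
  using taylor_coeff_mult[OF slice_analytic_const, of i f a k c]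
  by (simp add: taylor_coeff_const if_distrib[of "\<lambda>x. x * _"] sum.delta cong: if_cong)

lemma taylor_coeff_coord_mult:
  assumes "slice_analytic i f a"
  shows "taylor_coeff i k (\<lambda>b. b $ j * f b) a
           = a $ j * taylor_coeff i k f a + (if j = i \<and> 1 \<le> k then taylor_coeff i (k - 1) f a else 0)"
proof (cases k)
  case 0
  thus ?thesis by (simp add: taylor_coeff_mult[OF slice_analytic_coord assms] taylor_coeff_coord)
next
  case (Suc m)
  have "taylor_coeff i k (\<lambda>b. b $ j * f b) a = a $ j * taylor_coeff i k f a
          + (\<Sum>l=0..m. taylor_coeff i (Suc l) (\<lambda>b. b $ j) a * taylor_coeff i (m - l) f a)"
    unfolding Suc taylor_coeff_mult[OF slice_analytic_coord assms]
    by (subst sum.atLeast0_atMost_Suc_shift) (simp add: taylor_coeff_coord)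
  also have "(\<Sum>l=0..m. taylor_coeff i (Suc l) (\<lambda>b. b $ j) a * taylor_coeff i (m - l) f a)
               = (\<Sum>l=0..m. if l = 0 then (if j = i then taylor_coeff i m f a else 0) else 0)"
    by (intro sum.cong) (auto simp: taylor_coeff_coord)
  finally show ?thesis using Suc by simp
qed

lemma taylor_coeff_cong:
  assumes "open W" "a \<in> W" "\<And>b. b \<in> W \<Longrightarrow> f b = g b"
  shows "taylor_coeff i k f a = taylor_coeff i k g a"
proof -
  have "\<forall>\<^sub>F z in nhds (a $ i). f (upd_coord a i z) = g (upd_coord a i z)"
    using eventually_upd_coord_in_open[OF assms(1,2)] by eventually_elim (use assms(3) in auto)
  thus ?thesis unfolding taylor_coeff_def by (subst fps_expansion_cong) auto
qed

definition slice_increment :: "'d::finite \<Rightarrow> (complex^'d \<Rightarrow> complex) \<Rightarrow> complex^'d \<Rightarrow> complex fps" where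
  "slice_increment i s a = fps_expansion (\<lambda>z. s (upd_coord a i z)) (a $ i) - fps_const (s a)"

lemma slice_increment_nth:
  "slice_increment i s a $ j = (if j = 0 then 0 else taylor_coeff i j s a)"
  by (simp add: slice_increment_def taylor_coeff_def fps_expansion_def)

lemma taylor_coeff_compose:
  "slice_analytic i s a \<Longrightarrow> h analytic_on {s a} \<Longrightarrow>
     taylor_coeff i k (\<lambda>b. h (s b)) a = (fps_expansion h (s a) oo slice_increment i s a) $ k"
  unfolding slice_analytic_def taylor_coeff_def slice_increment_def
  by (subst fps_expansion_compose) simp_all

lemma taylor_coeff_compose_split_linear:
  assumes "slice_analytic i s a" "h analytic_on {s a}" "1 \<le> k"
  shows "taylor_coeff i k (\<lambda>b. h (s b)) a = fps_expansion h (s a) $ 1 * taylor_coeff i k s a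
           + (\<Sum>r=2..k. fps_expansion h (s a) $ r * (slice_increment i s a ^ r) $ k)"
  using assms by (simp add: taylor_coeff_compose fps_compose_nth_split_linear slice_increment_nth)

lemma funpow_cpartial_div:
  assumes "slice_analytic i (\<lambda>b. f b / c) a" "c \<noteq> 0"
  shows "(cpartial i ^^ k) f a / (fact k * c) = taylor_coeff i k (\<lambda>b. f b / c) a"
proof -
  have "taylor_coeff i k f a = taylor_coeff i k (\<lambda>b. c * (f b / c)) a"
    using assms(2) by simp
  also have "\<dots> = c * taylor_coeff i k (\<lambda>b. f b / c) a"
    by (rule taylor_coeff_cmult[OF assms(1)])
  finally show ?thesis
    using assms(2) by (simp add: funpow_cpartial)
qed

section \<open>Admissible functions\<close>

locale implicit_root =
  fixes \<gamma> :: "int^'d::finite" and g :: "complex \<Rightarrow> complex" and \<alpha> :: complex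
    and U :: "(complex^'d) set" and \<psi> :: "complex^'d \<Rightarrow> complex"
  assumes g_holo: "g holomorphic_on UNIV"
    and alpha_nz: "\<alpha> \<noteq> 0"
    and simple: "deriv g \<alpha> \<noteq> 0"
    and U_open: "open U" and U0: "0 \<in> U"
    and psi_holo: "cholomorphic_on \<psi> U"
    and psi_nz: "\<forall>a\<in>U. \<psi> a \<noteq> 0"
    and psi_eq: "\<forall>a\<in>U. g (\<psi> a) + (\<Sum>i\<in>UNIV. a $ i * \<psi> a powi (\<gamma> $ i)) = 0"
    and psi0: "\<psi> 0 = \<alpha>"
begin

text \<open>\<open>gcoeff m \<alpha>\<close> is the coefficient \<open>c\<^sub>m\<close> of the statement.\<close>

definition gcoeff :: "nat \<Rightarrow> complex \<Rightarrow> complex" where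
  "gcoeff m u = (deriv ^^ m) g u / fact m"

text \<open>The derivative in \<open>u\<close> of \<open>g u + (\<Sum>j. a\<^sub>j u\<^bsup>\<gamma>\<^sub>j\<^esup>)\<close> at \<open>u = \<psi> a\<close>; its
  inverse is the only denominator that differentiating the defining equation produces.\<close>

definition dF :: "complex^'d \<Rightarrow> complex" where
  "dF a = gcoeff 1 (\<psi> a) + (\<Sum>j\<in>UNIV. of_int (\<gamma> $ j) * (a $ j * \<psi> a powi (\<gamma> $ j - 1)))"

definition V :: "(complex^'d) set" where
  "V = {a \<in> U. dF a \<noteq> 0}"

definition generator :: "nat \<Rightarrow> complex" where
  "generator j = (if j = 0 then inverse \<alpha> else if j = 1 then inverse (gcoeff 1 \<alpha>) else gcoeff j \<alpha>)"

lemma gcoeff_analytic: "gcoeff m analytic_on S"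
proof -
  have "(\<lambda>u. (deriv ^^ m) g u / fact m) holomorphic_on UNIV"
    by (intro holomorphic_intros holomorphic_higher_deriv[OF g_holo]) auto
  hence "gcoeff m analytic_on UNIV"
    by (simp add: gcoeff_def[abs_def] analytic_on_open)
  thus ?thesis using analytic_on_subset by blast
qed

lemma g_analytic: "g analytic_on S"
  using g_holo analytic_on_open analytic_on_subset by blast

lemma fps_expansion_g_nth: "fps_expansion g u $ r = gcoeff r u"
  by (simp add: fps_expansion_def gcoeff_def)

lemma fps_expansion_gcoeff_nth: "fps_expansion (gcoeff m) u $ r = of_nat ((m + r) choose r) * gcoeff (m + r) u"
  unfolding gcoeff_def[abs_def] by (rule fps_expansion_higher_deriv_nth[OF g_holo]) auto

lemma dF_continuous_on: "continuous_on U dF"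
proof -
  have psi: "continuous_on U \<psi>"
    by (rule cholomorphic_on_imp_continuous_on[OF psi_holo])
  have "continuous_on UNIV (gcoeff 1)"
    using gcoeff_analytic analytic_imp_holomorphic holomorphic_on_imp_continuous_on by blast
  hence "continuous_on U (\<lambda>a. gcoeff 1 (\<psi> a))"
    by (rule continuous_on_compose2[OF _ psi]) auto
  thus ?thesis
    unfolding dF_def[abs_def] using psi_nz by (intro continuous_intros psi) auto
qed

lemma open_V: "open V"
proof -
  have "open (U \<inter> dF -` (-{0}))"
    by (rule continuous_open_preimage[OF dF_continuous_on U_open]) auto
  thus ?thesis by (simp add: V_def Int_def vimage_def)
qed

lemma dF_0: "dF 0 = deriv g \<alpha>"
  by (simp add: dF_def gcoeff_def psi0)

lemma zero_in_V: "0 \<in> V"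
  using U0 simple by (simp add: V_def dF_0)

lemma V_subset_U: "V \<subseteq> U"
  by (auto simp: V_def)

lemma dF_nonzero: "a \<in> V \<Longrightarrow> dF a \<noteq> 0"
  by (simp add: V_def)

lemma psi_nonzero: "a \<in> V \<Longrightarrow> \<psi> a \<noteq> 0"
  using psi_nz V_subset_U by auto

lemma slice_analytic_psi: "a \<in> V \<Longrightarrow> slice_analytic i \<psi> a"
  using cholomorphic_on_imp_slice_analytic[OF psi_holo U_open] V_subset_U by auto

lemma slice_analytic_powi_psi: "a \<in> V \<Longrightarrow> slice_analytic i (\<lambda>b. \<psi> b powi e) a"
  by (rule slice_analytic_compose[OF slice_analytic_psi]) (auto intro!: analytic_intros simp: psi_nonzero)

lemma slice_analytic_gcoeff_psi: "a \<in> V \<Longrightarrow> slice_analytic i (\<lambda>b. gcoeff m (\<psi> b)) a"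
  by (rule slice_analytic_compose[OF slice_analytic_psi gcoeff_analytic])

lemma slice_analytic_dF: "a \<in> V \<Longrightarrow> slice_analytic i dF a"
  unfolding dF_def[abs_def]
  by (intro slice_analytic_add slice_analytic_sum slice_analytic_mult slice_analytic_const
      slice_analytic_coord slice_analytic_gcoeff_psi slice_analytic_powi_psi) auto

text \<open>\<open>admissible w K f\<close>: on \<open>V\<close>, \<open>f\<close> is an integer polynomial in \<open>\<psi>\<^sup>\<plusminus>\<^sup>1\<close>, the
  coordinates, \<open>1 / dF\<close> (if \<open>1 \<le> K\<close>) and \<open>gcoeff m \<circ> \<psi>\<close> for \<open>2 \<le> m \<le> K\<close>, of weight at most \<open>w\<close>
  when \<open>\<psi>\<close> has weight \<open>1\<close> and \<open>a\<^sub>j\<close> has weight \<open>-\<gamma>\<^sub>j\<close>.  Evaluation at \<open>0\<close>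
  sends these generators to \<open>\<alpha>\<^sup>\<plusminus>\<^sup>1\<close>, \<open>0\<close>, \<open>c\<^sub>1\<^sup>-\<^sup>1\<close> and \<open>c\<^sub>m\<close>.\<close>

inductive admissible :: "int \<Rightarrow> nat \<Rightarrow> (complex^'d \<Rightarrow> complex) \<Rightarrow> bool" where
  zero: "admissible w K (\<lambda>_. 0)"
| of_int: "admissible 0 0 (\<lambda>_. of_int c)"
| psi: "admissible 1 0 \<psi>"
| inverse_psi: "admissible (-1) 0 (\<lambda>a. inverse (\<psi> a))"
| coord: "admissible (- \<gamma> $ j) 0 (\<lambda>a. a $ j)"
| inverse_dF: "admissible 0 1 (\<lambda>a. inverse (dF a))"
| gcoeff_psi: "2 \<le> m \<Longrightarrow> admissible 0 m (\<lambda>a. gcoeff m (\<psi> a))"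
| add: "admissible w K f \<Longrightarrow> admissible w K h \<Longrightarrow> admissible w K (\<lambda>a. f a + h a)"
| mult: "admissible w1 K1 f \<Longrightarrow> admissible w2 K2 h \<Longrightarrow>
    admissible (w1 + w2) (max K1 K2) (\<lambda>a. f a * h a)"
| weaken: "admissible w K f \<Longrightarrow> w \<le> w' \<Longrightarrow> K \<le> K' \<Longrightarrow> admissible w' K' f"
| eq_on_V: "admissible w K f \<Longrightarrow> (\<And>a. a \<in> V \<Longrightarrow> f a = h a) \<Longrightarrow> admissible w K h"

lemma admissible_slice_analytic: "admissible w K f \<Longrightarrow> a \<in> V \<Longrightarrow> slice_analytic i f a"
proof (induction rule: admissible.induct)
  case (inverse_psi)
  show ?case
    by (rule slice_analytic_compose[OF slice_analytic_psi])
      (use inverse_psi psi_nonzero in \<open>auto intro!: analytic_intros\<close>)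
next
  case (inverse_dF)
  show ?case
    by (rule slice_analytic_compose[OF slice_analytic_dF])
      (use inverse_dF dF_nonzero in \<open>auto intro!: analytic_intros\<close>)
next
  case (eq_on_V w K f h)
  thus ?case using slice_analytic_cong[OF _ open_V] by blast
qed (simp_all add: slice_analytic_const slice_analytic_psi slice_analytic_coord
      slice_analytic_gcoeff_psi slice_analytic_add slice_analytic_mult)

lemma alpha_powi_eq_generator_power:
  assumes "w \<le> w'"
  shows "\<alpha> powi w = \<alpha> powi w' * generator 0 ^ nat (w' - w)"
proof -
  have "\<alpha> powi w' * generator 0 ^ nat (w' - w) = \<alpha> powi w' * \<alpha> powi (- int (nat (w' - w)))"
    by (simp add: generator_def power_int_def)
  also have "\<dots> = \<alpha> powi w"
    using alpha_nz assms by (simp flip: power_int_add)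
  finally show ?thesis ..
qed

lemma admissible_value:
  "admissible w K f \<Longrightarrow> K \<le> N \<Longrightarrow> \<exists>p\<in>int_poly_vals N generator. f 0 = \<alpha> powi w * p"
proof (induction rule: admissible.induct)
  case (zero w K)
  show ?case using int_poly_vals_of_int[of 0] by force
next
  case (of_int c)
  show ?case using int_poly_vals_of_int[of c] by force
next
  case psi
  show ?case using int_poly_vals_of_int[of 1] by (force simp: psi0)
next
  case inverse_psi
  show ?case using int_poly_vals_of_int[of 1] by (force simp: psi0 power_int_def)
next
  case (coord j)
  show ?case using int_poly_vals_of_int[of 0] by force
next
  case inverse_dF
  have "inverse (dF 0) = generator 1"
    by (simp add: dF_0 generator_def gcoeff_def)
  thus ?case using int_poly_vals_var[of 1 N generator] inverse_dF by force
next
  case (gcoeff_psi m)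
  hence "gcoeff m (\<psi> 0) = generator m"
    by (simp add: psi0 generator_def)
  thus ?case using int_poly_vals_var[of m N generator] gcoeff_psi by force
next
  case (add w K f h)
  then obtain p q where "p \<in> int_poly_vals N generator" "f 0 = \<alpha> powi w * p"
    "q \<in> int_poly_vals N generator" "h 0 = \<alpha> powi w * q" by blast
  thus ?case by (intro bexI[of _ "p + q"] int_poly_vals_add) (auto simp: distrib_left)
next
  case (mult w1 K1 f w2 K2 h)
  then obtain p q where "p \<in> int_poly_vals N generator" "f 0 = \<alpha> powi w1 * p"
    "q \<in> int_poly_vals N generator" "h 0 = \<alpha> powi w2 * q" by auto
  thus ?case
    using alpha_nz by (intro bexI[of _ "p * q"] int_poly_vals_mult) (auto simp: power_int_add)
next
  case (weaken w K f w' K')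
  then obtain p where p: "p \<in> int_poly_vals N generator" "f 0 = \<alpha> powi w * p"
    by auto
  have "generator 0 ^ nat (w' - w) * p \<in> int_poly_vals N generator"
    by (intro int_poly_vals_mult int_poly_vals_power int_poly_vals_var p(1)) simp
  moreover have "f 0 = \<alpha> powi w' * (generator 0 ^ nat (w' - w) * p)"
    using p(2) alpha_powi_eq_generator_power[OF weaken.hyps(2)] by (simp add: mult.assoc)
  ultimately show ?case ..
next
  case (eq_on_V w K f h)
  moreover have "f 0 = h 0"
    using eq_on_V.hyps(2) zero_in_V by simp
  ultimately show ?case by simp
qed

lemma admissible_sum:
  "finite J \<Longrightarrow> (\<And>j. j \<in> J \<Longrightarrow> admissible w K (f j)) \<Longrightarrow> admissible w K (\<lambda>a. \<Sum>j\<in>J. f j a)"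
  by (induction J rule: finite_induct) (auto intro: admissible.zero admissible.add)

lemma admissible_power: "admissible w K f \<Longrightarrow> admissible (int n * w) K (\<lambda>a. f a ^ n)"
proof (induction n)
  case 0
  show ?case using admissible.weaken[OF admissible.of_int[of 1]] by simp
next
  case (Suc n)
  thus ?case using admissible.mult[OF Suc.prems Suc.IH] by (simp add: algebra_simps)
qed

lemma admissible_powi_psi: "admissible e 0 (\<lambda>a. \<psi> a powi e)"
proof (cases "e \<ge> 0")
  case True
  thus ?thesis using admissible_power[OF admissible.psi, of "nat e"] by (simp add: power_int_def)
next
  case False
  thus ?thesis using admissible_power[OF admissible.inverse_psi, of "nat (- e)"]
    by (simp add: power_int_def)
qed

lemma admissible_mult_graded:
  assumes "admissible (int l * c) (l + K0) f" "admissible (int n * c) (n + K0) h"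
  shows "admissible (int (l + n) * c) (l + n + K0) (\<lambda>a. f a * h a)"
  by (rule admissible.weaken[OF admissible.mult[OF assms]]) (auto simp: algebra_simps)

lemma admissible_fps_power_nth:
  fixes G :: "complex^'d \<Rightarrow> complex fps"
  assumes G0: "\<And>a. G a $ 0 = 0"
    and G: "\<And>j. 1 \<le> j \<Longrightarrow> j \<le> m \<Longrightarrow> admissible (int j * c) (j + K0) (\<lambda>a. G a $ j)"
  shows "admissible (int m * c) (m + K0) (\<lambda>a. (G a ^ r) $ m)"
  using G
proof (induction r arbitrary: m)
  case 0
  show ?case
  proof (cases "m = 0")
    case True
    thus ?thesis using admissible.weaken[OF admissible.of_int[of 1], of 0 K0] by simp
  next
    case False
    thus ?thesis using admissible.zero by simp
  qed
next
  case (Suc r)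
  have "admissible (int m * c) (m + K0) (\<lambda>a. \<Sum>l=0..m. G a $ l * (G a ^ r) $ (m - l))"
  proof (intro admissible_sum)
    fix l assume l: "l \<in> {0..m}"
    show "admissible (int m * c) (m + K0) (\<lambda>a. G a $ l * (G a ^ r) $ (m - l))"
    proof (cases "l = 0")
      case True
      thus ?thesis using admissible.zero by (simp add: G0)
    next
      case False
      have "admissible (int (m - l) * c) (m - l + K0) (\<lambda>a. (G a ^ r) $ (m - l))"
        by (rule Suc.IH) (use Suc.prems in auto)
      moreover have "admissible (int l * c) (l + K0) (\<lambda>a. G a $ l)"
        using Suc.prems False l by auto
      ultimately have "admissible (int (l + (m - l)) * c) (l + (m - l) + K0)
                         (\<lambda>a. G a $ l * (G a ^ r) $ (m - l))"
        by (intro admissible_mult_graded)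
      thus ?thesis using l by simp
    qed
  qed simp
  thus ?case by (simp add: fps_mult_nth)
qed

lemma admissible_fps_power_nth_nonlinear:
  fixes G :: "complex^'d \<Rightarrow> complex fps"
  assumes G0: "\<And>a. G a $ 0 = 0"
    and G: "\<And>j. 1 \<le> j \<Longrightarrow> j < m \<Longrightarrow> admissible (int j * c) (j + K0) (\<lambda>a. G a $ j)"
    and r: "2 \<le> r"
  shows "admissible (int m * c) (m + K0) (\<lambda>a. (G a ^ r) $ m)"
proof -
  have "admissible (int m * c) (m + K0) (\<lambda>a. \<Sum>l=0..m. G a $ l * (G a ^ (r - 1)) $ (m - l))"
  proof (intro admissible_sum)
    fix l assume l: "l \<in> {0..m}"
    show "admissible (int m * c) (m + K0) (\<lambda>a. G a $ l * (G a ^ (r - 1)) $ (m - l))"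
    proof (cases "l = 0 \<or> l = m")
      case True
      have "(G a ^ (r - 1)) $ 0 = 0" for a
        using r by (simp add: fps_power_zeroth G0)
      with True have "(\<lambda>a. G a $ l * (G a ^ (r - 1)) $ (m - l)) = (\<lambda>_. 0)"
        by (auto simp: G0)
      thus ?thesis by (simp add: admissible.zero)
    next
      case False
      have "admissible (int (m - l) * c) (m - l + K0) (\<lambda>a. (G a ^ (r - 1)) $ (m - l))"
        by (rule admissible_fps_power_nth[OF G0]) (use False l in \<open>auto intro: G\<close>)
      moreover have "admissible (int l * c) (l + K0) (\<lambda>a. G a $ l)"
        using G False l by auto
      ultimately have "admissible (int (l + (m - l)) * c) (l + (m - l) + K0)
                         (\<lambda>a. G a $ l * (G a ^ (r - 1)) $ (m - l))"
        by (intro admissible_mult_graded)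
      thus ?thesis using l by simp
    qed
  qed simp
  moreover have "G a ^ r = G a * G a ^ (r - 1)" for a
    using r by (simp flip: power_Suc)
  ultimately show ?thesis by (simp add: fps_mult_nth)
qed

lemma admissible_taylor_coeff_compose:
  assumes s: "\<And>a. a \<in> V \<Longrightarrow> slice_analytic i s a"
    and h: "\<And>a. a \<in> V \<Longrightarrow> h analytic_on {s a}"
    and incr: "\<And>j. 1 \<le> j \<Longrightarrow> j \<le> k \<Longrightarrow> admissible (int j * \<gamma> $ i) (j + K0) (taylor_coeff i j s)"
    and coef: "\<And>r. 1 \<le> r \<Longrightarrow> r \<le> k \<Longrightarrow> admissible w (K + r) (\<lambda>a. fps_expansion h (s a) $ r)"
    and k: "1 \<le> k"
  shows "admissible (w + int k * \<gamma> $ i) (k + max K K0) (taylor_coeff i k (\<lambda>b. h (s b)))"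
proof -
  let ?G = "slice_increment i s"
  have pow: "admissible (int k * \<gamma> $ i) (k + K0) (\<lambda>a. (?G a ^ r) $ k)" for r
    by (rule admissible_fps_power_nth) (simp_all add: slice_increment_nth incr)
  have "admissible (w + int k * \<gamma> $ i) (k + max K K0)
          (\<lambda>a. \<Sum>r=1..k. fps_expansion h (s a) $ r * (?G a ^ r) $ k)"
  proof (intro admissible_sum)
    fix r assume "r \<in> {1..k}"
    thus "admissible (w + int k * \<gamma> $ i) (k + max K K0) (\<lambda>a. fps_expansion h (s a) $ r * (?G a ^ r) $ k)"
      by (intro admissible.weaken[OF admissible.mult[OF coef pow]]) auto
  qed simp
  thus ?thesis
  proof (rule admissible.eq_on_V)
    fix a assume a: "a \<in> V"
    have "taylor_coeff i k (\<lambda>b. h (s b)) a = (\<Sum>r=0..k. fps_expansion h (s a) $ r * (?G a ^ r) $ k)"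
      using s[OF a] h[OF a] by (simp add: taylor_coeff_compose fps_compose_nth)
    also have "\<dots> = (\<Sum>r=1..k. fps_expansion h (s a) $ r * (?G a ^ r) $ k)"
      using k by (simp add: sum.atLeast_Suc_atMost)
    finally show "(\<Sum>r=1..k. fps_expansion h (s a) $ r * (?G a ^ r) $ k) = taylor_coeff i k (\<lambda>b. h (s b)) a" ..
  qed
qed

lemma admissible_binomial_powi_psi:
  "admissible (e - int r) 0 (\<lambda>a. (of_int e gchoose r) * \<psi> a powi (e - int r))"
proof -
  obtain c where "(of_int e gchoose r :: complex) = of_int c"
    using gbinomial_of_int_in_Ints[of e r] by (blast elim: Ints_cases)
  thus ?thesis
    using admissible.mult[OF admissible.of_int[of c] admissible_powi_psi[of "e - int r"]] by simp
qed

lemma admissible_taylor_coeff_powi_psi_upto: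
  assumes psi: "\<And>j. 1 \<le> j \<Longrightarrow> j \<le> m \<Longrightarrow> admissible (int j * \<gamma> $ i) j (taylor_coeff i j \<psi>)"
  shows "admissible (e + int m * \<gamma> $ i) m (taylor_coeff i m (\<lambda>b. \<psi> b powi e))"
proof (cases "m = 0")
  case True
  thus ?thesis by (simp add: admissible_powi_psi)
next
  case False
  have "admissible (e + int m * \<gamma> $ i) (m + max 0 0) (taylor_coeff i m (\<lambda>b. (\<lambda>v. v powi e) (\<psi> b)))"
  proof (rule admissible_taylor_coeff_compose[OF slice_analytic_psi])
    show "(\<lambda>v. v powi e) analytic_on {\<psi> a}" if "a \<in> V" for a
      using that psi_nonzero by (auto intro!: analytic_intros)
    show "admissible e (0 + r) (\<lambda>a. fps_expansion (\<lambda>v. v powi e) (\<psi> a) $ r)" for r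
      by (rule admissible.eq_on_V[OF admissible.weaken[OF admissible_binomial_powi_psi]])
        (auto simp: fps_expansion_power_int_nth psi_nonzero)
  qed (use psi False in auto)
  thus ?thesis by simp
qed

section \<open>Taylor coefficients of the root\<close>

text \<open>\<open>rest i k a\<close> collects the terms of the \<open>k\<close>-th Taylor coefficient in \<open>a\<^sub>i\<close> of the
  defining equation other than \<open>dF a \<cdot> taylor_coeff i k \<psi> a\<close>; only coefficients of \<open>\<psi>\<close> of
  order below \<open>k\<close> enter it.\<close>

definition rest :: "'d \<Rightarrow> nat \<Rightarrow> complex^'d \<Rightarrow> complex" where
  "rest i k a =
     (\<Sum>r=2..k. gcoeff r (\<psi> a) * (slice_increment i \<psi> a ^ r) $ k)
   + (\<Sum>j\<in>UNIV. a $ j * (\<Sum>r=2..k. (of_int (\<gamma> $ j) gchoose r) * \<psi> a powi (\<gamma> $ j - int r)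
                                     * (slice_increment i \<psi> a ^ r) $ k))
   + taylor_coeff i (k - 1) (\<lambda>b. \<psi> b powi (\<gamma> $ i)) a"

lemma taylor_coeff_defining_equation:
  assumes a: "a \<in> V" and k: "1 \<le> k"
  shows "taylor_coeff i k (\<lambda>b. g (\<psi> b)) a
           + (\<Sum>j\<in>UNIV. taylor_coeff i k (\<lambda>b. b $ j * \<psi> b powi (\<gamma> $ j)) a) = 0"
proof -
  have "taylor_coeff i k (\<lambda>b. g (\<psi> b) + (\<Sum>j\<in>UNIV. b $ j * \<psi> b powi (\<gamma> $ j))) a
          = taylor_coeff i k (\<lambda>_. 0) a"
    by (rule taylor_coeff_cong[OF open_V a]) (use psi_eq V_subset_U in auto)
  thus ?thesis
    using a k by (simp add: taylor_coeff_const taylor_coeff_add taylor_coeff_sum slice_analytic_sum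
        slice_analytic_mult slice_analytic_coord slice_analytic_powi_psi
        slice_analytic_compose[OF slice_analytic_psi g_analytic])
qed

lemma taylor_coeff_psi_recursion:
  assumes a: "a \<in> V" and k: "1 \<le> k"
  shows "dF a * taylor_coeff i k \<psi> a + rest i k a = 0"
proof -
  define u where "u = \<psi> a"
  define G where "G = slice_increment i \<psi> a"
  define h where "h = taylor_coeff i k \<psi> a"
  define S1 where "S1 = (\<Sum>r=2..k. gcoeff r u * (G ^ r) $ k)"
  define S2 where "S2 j = (\<Sum>r=2..k. (of_int (\<gamma> $ j) gchoose r) * u powi (\<gamma> $ j - int r) * (G ^ r) $ k)" for j
  define T where "T = taylor_coeff i (k - 1) (\<lambda>b. \<psi> b powi (\<gamma> $ i)) a"
  have u: "u \<noteq> 0"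
    using psi_nonzero[OF a] by (simp add: u_def)
  have g_part: "taylor_coeff i k (\<lambda>b. g (\<psi> b)) a = gcoeff 1 u * h + S1"
    using taylor_coeff_compose_split_linear[OF slice_analytic_psi[OF a] g_analytic k]
    by (simp add: fps_expansion_g_nth u_def G_def h_def S1_def)
  have powi_part: "taylor_coeff i k (\<lambda>b. \<psi> b powi e) a = of_int e * u powi (e - 1) * h
                     + (\<Sum>r=2..k. (of_int e gchoose r) * u powi (e - int r) * (G ^ r) $ k)" for e
  proof -
    have "(\<lambda>v. v powi e) analytic_on {\<psi> a}"
      using u by (auto intro!: analytic_intros simp: u_def)
    from taylor_coeff_compose_split_linear[OF slice_analytic_psi[OF a] this k]
    show ?thesis
      using u by (simp add: fps_expansion_power_int_nth u_def G_def h_def)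
  qed
  have coord_part: "taylor_coeff i k (\<lambda>b. b $ j * \<psi> b powi (\<gamma> $ j)) a
      = a $ j * (of_int (\<gamma> $ j) * u powi (\<gamma> $ j - 1) * h + S2 j) + (if j = i then T else 0)" for j
    using k by (simp add: taylor_coeff_coord_mult slice_analytic_powi_psi[OF a] powi_part S2_def T_def)
  have "0 = gcoeff 1 u * h + S1
            + (\<Sum>j\<in>UNIV. a $ j * (of_int (\<gamma> $ j) * u powi (\<gamma> $ j - 1) * h + S2 j) + (if j = i then T else 0))"
    using taylor_coeff_defining_equation[OF a k, where i=i] by (simp add: g_part coord_part)
  also have "\<dots> = gcoeff 1 u * h + S1 + ((\<Sum>j\<in>UNIV. of_int (\<gamma> $ j) * (a $ j * u powi (\<gamma> $ j - 1)) * h)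
                    + (\<Sum>j\<in>UNIV. a $ j * S2 j) + T)"
    by (simp add: sum.distrib distrib_left mult_ac)
  also have "\<dots> = (gcoeff 1 u + (\<Sum>j\<in>UNIV. of_int (\<gamma> $ j) * (a $ j * u powi (\<gamma> $ j - 1)))) * h
                    + (S1 + (\<Sum>j\<in>UNIV. a $ j * S2 j) + T)"
    by (simp add: sum_distrib_left algebra_simps)
  also have "\<dots> = dF a * taylor_coeff i k \<psi> a + rest i k a"
    by (simp add: dF_def rest_def u_def G_def h_def S1_def S2_def T_def)
  finally show ?thesis ..
qed

lemma admissible_rest:
  assumes k: "1 \<le> k"
    and psi: "\<And>j. 1 \<le> j \<Longrightarrow> j < k \<Longrightarrow> admissible (int j * \<gamma> $ i) j (taylor_coeff i j \<psi>)"
  shows "admissible (int k * \<gamma> $ i) k (rest i k)"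
proof -
  let ?G = "slice_increment i \<psi>"
  have pow: "admissible (int k * \<gamma> $ i) k (\<lambda>a. (?G a ^ r) $ k)" if "2 \<le> r" for r
    using admissible_fps_power_nth_nonlinear[of ?G k "\<gamma> $ i" 0 r] psi that
    by (simp add: slice_increment_nth)
  have S1: "admissible (int k * \<gamma> $ i) k (\<lambda>a. \<Sum>r=2..k. gcoeff r (\<psi> a) * (?G a ^ r) $ k)"
    by (intro admissible_sum admissible.weaken[OF admissible.mult[OF admissible.gcoeff_psi pow]]) auto
  have S2: "admissible (int k * \<gamma> $ i) k (\<lambda>a. \<Sum>j\<in>UNIV. a $ j * (\<Sum>r=2..k.
              (of_int (\<gamma> $ j) gchoose r) * \<psi> a powi (\<gamma> $ j - int r) * (?G a ^ r) $ k))"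
  proof (intro admissible_sum)
    fix j
    have "admissible (\<gamma> $ j + int k * \<gamma> $ i) k (\<lambda>a. \<Sum>r=2..k.
            (of_int (\<gamma> $ j) gchoose r) * \<psi> a powi (\<gamma> $ j - int r) * (?G a ^ r) $ k)"
      by (intro admissible_sum admissible.weaken[OF admissible.mult[OF admissible_binomial_powi_psi pow]])
        auto
    from admissible.mult[OF admissible.coord this]
    show "admissible (int k * \<gamma> $ i) k (\<lambda>a. a $ j * (\<Sum>r=2..k.
            (of_int (\<gamma> $ j) gchoose r) * \<psi> a powi (\<gamma> $ j - int r) * (?G a ^ r) $ k))"
      by (rule admissible.weaken) auto
  qed simp
  have "admissible (\<gamma> $ i + int (k - 1) * \<gamma> $ i) (k - 1) (taylor_coeff i (k - 1) (\<lambda>b. \<psi> b powi (\<gamma> $ i)))"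
    by (rule admissible_taylor_coeff_powi_psi_upto) (use psi in simp)
  hence T: "admissible (int k * \<gamma> $ i) k (taylor_coeff i (k - 1) (\<lambda>b. \<psi> b powi (\<gamma> $ i)))"
    by (rule admissible.weaken) (use k in \<open>auto simp: of_nat_diff algebra_simps\<close>)
  show ?thesis
    unfolding rest_def[abs_def] by (intro admissible.add S1 S2 T)
qed

lemma admissible_taylor_coeff_psi: "1 \<le> k \<Longrightarrow> admissible (int k * \<gamma> $ i) k (taylor_coeff i k \<psi>)"
proof (induction k rule: less_induct)
  case (less k)
  have "admissible (0 + 0 + int k * \<gamma> $ i) (max (max 0 1) k) (\<lambda>a. of_int (-1) * inverse (dF a) * rest i k a)"
    by (intro admissible.mult admissible.of_int admissible.inverse_dF admissible_rest less) auto
  hence "admissible (int k * \<gamma> $ i) k (\<lambda>a. of_int (-1) * inverse (dF a) * rest i k a)"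
    by (rule admissible.weaken) (use less in auto)
  thus ?case
  proof (rule admissible.eq_on_V)
    fix a assume a: "a \<in> V"
    have "rest i k a = - (dF a * taylor_coeff i k \<psi> a)"
      using taylor_coeff_psi_recursion[OF a less.prems] by (simp add: add_eq_0_iff)
    thus "of_int (-1) * inverse (dF a) * rest i k a = taylor_coeff i k \<psi> a"
      using dF_nonzero[OF a] by simp
  qed
qed

lemma admissible_taylor_coeff_powi_psi:
  "admissible (e + int m * \<gamma> $ i) m (taylor_coeff i m (\<lambda>b. \<psi> b powi e))"
  by (intro admissible_taylor_coeff_powi_psi_upto admissible_taylor_coeff_psi)

lemma admissible_taylor_coeff_coord_mult:
  assumes f: "\<And>m. admissible (w + int m * \<gamma> $ i) (K + m) (taylor_coeff i m f)"
    and f_analytic: "\<And>a. a \<in> V \<Longrightarrow> slice_analytic i f a"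
  shows "admissible (w - \<gamma> $ j + int k * \<gamma> $ i) (K + k) (taylor_coeff i k (\<lambda>b. b $ j * f b))"
proof -
  have "admissible (w - \<gamma> $ j + int k * \<gamma> $ i) (K + k)
          (\<lambda>a. a $ j * taylor_coeff i k f a + (if j = i \<and> 1 \<le> k then taylor_coeff i (k - 1) f a else 0))"
  proof (intro admissible.add)
    show "admissible (w - \<gamma> $ j + int k * \<gamma> $ i) (K + k) (\<lambda>a. a $ j * taylor_coeff i k f a)"
      by (rule admissible.weaken[OF admissible.mult[OF admissible.coord f]]) auto
    show "admissible (w - \<gamma> $ j + int k * \<gamma> $ i) (K + k)
            (\<lambda>a. if j = i \<and> 1 \<le> k then taylor_coeff i (k - 1) f a else 0)"
    proof (cases "j = i \<and> 1 \<le> k")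
      case True
      have "admissible (w - \<gamma> $ j + int k * \<gamma> $ i) (K + k) (taylor_coeff i (k - 1) f)"
        by (rule admissible.weaken[OF f]) (use True in \<open>auto simp: of_nat_diff algebra_simps\<close>)
      thus ?thesis using True by simp
    next
      case False
      hence "(\<lambda>a. if j = i \<and> 1 \<le> k then taylor_coeff i (k - 1) f a else 0) = (\<lambda>_. 0)"
        by auto
      thus ?thesis by (simp add: admissible.zero)
    qed
  qed
  thus ?thesis
    by (rule admissible.eq_on_V) (simp add: taylor_coeff_coord_mult f_analytic)
qed

lemma admissible_taylor_coeff_dF:
  assumes k: "1 \<le> k"
  shows "admissible (int k * \<gamma> $ i) (k + 1) (taylor_coeff i k dF)"
proof -
  have "admissible (0 + int k * \<gamma> $ i) (k + max 1 0) (taylor_coeff i k (\<lambda>b. gcoeff 1 (\<psi> b)))"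
  proof (rule admissible_taylor_coeff_compose[OF slice_analytic_psi gcoeff_analytic])
    show "admissible 0 (1 + r) (\<lambda>a. fps_expansion (gcoeff 1) (\<psi> a) $ r)" if "1 \<le> r" for r
      using admissible.mult[OF admissible.of_int[of "int ((1 + r) choose r)"] admissible.gcoeff_psi[of "1 + r"]] that
      by (simp add: fps_expansion_gcoeff_nth)
  qed (use k admissible_taylor_coeff_psi in auto)
  hence gcoeff_part: "admissible (int k * \<gamma> $ i) (k + 1) (taylor_coeff i k (\<lambda>b. gcoeff 1 (\<psi> b)))"
    by simp
  have sum_part: "admissible (int k * \<gamma> $ i) (k + 1)
      (taylor_coeff i k (\<lambda>b. of_int (\<gamma> $ j) * (b $ j * \<psi> b powi (\<gamma> $ j - 1))))" for j
  proof -
    have "admissible (\<gamma> $ j - 1 - \<gamma> $ j + int k * \<gamma> $ i) (0 + k)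
            (taylor_coeff i k (\<lambda>b. b $ j * \<psi> b powi (\<gamma> $ j - 1)))"
      by (intro admissible_taylor_coeff_coord_mult)
        (simp_all add: admissible_taylor_coeff_powi_psi slice_analytic_powi_psi)
    from admissible.mult[OF admissible.of_int[of "\<gamma> $ j"] this]
    show ?thesis
      by (rule admissible.eq_on_V[OF admissible.weaken])
        (auto simp: taylor_coeff_cmult slice_analytic_mult slice_analytic_coord slice_analytic_powi_psi)
  qed
  have "admissible (int k * \<gamma> $ i) (k + 1) (\<lambda>a. taylor_coeff i k (\<lambda>b. gcoeff 1 (\<psi> b)) a
          + (\<Sum>j\<in>UNIV. taylor_coeff i k (\<lambda>b. of_int (\<gamma> $ j) * (b $ j * \<psi> b powi (\<gamma> $ j - 1))) a))"
    by (intro admissible.add admissible_sum gcoeff_part sum_part) simp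
  thus ?thesis
    by (rule admissible.eq_on_V)
      (simp add: dF_def[abs_def] taylor_coeff_add taylor_coeff_sum slice_analytic_gcoeff_psi
        slice_analytic_sum slice_analytic_mult slice_analytic_const slice_analytic_coord slice_analytic_powi_psi)
qed

section \<open>Closure under Taylor coefficients\<close>

lemma admissible_taylor_coeff_coord:
  "admissible (- \<gamma> $ j + int k * \<gamma> $ i) k (taylor_coeff i k (\<lambda>a. a $ j))"
proof -
  consider "k = 0" | "k = 1 \<and> j = i" | "k \<noteq> 0 \<and> \<not> (k = 1 \<and> j = i)"
    by blast
  thus ?thesis
  proof cases
    case 1
    thus ?thesis by (simp add: admissible.coord)
  next
    case 2
    hence "admissible (- \<gamma> $ j + int k * \<gamma> $ i) k (\<lambda>_. of_int 1)"
      by (intro admissible.weaken[OF admissible.of_int]) auto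
    thus ?thesis by (rule admissible.eq_on_V) (use 2 in \<open>simp add: taylor_coeff_coord\<close>)
  next
    case 3
    thus ?thesis by (intro admissible.eq_on_V[OF admissible.zero]) (auto simp: taylor_coeff_coord)
  qed
qed

lemma admissible_fps_expansion_inverse_dF_nth:
  "admissible 0 (1 + r) (\<lambda>a. fps_expansion (\<lambda>v. v powi (-1)) (dF a) $ r)"
proof -
  obtain c where "(of_int (-1) gchoose r :: complex) = of_int c"
    using gbinomial_of_int_in_Ints[of "-1" r] by (blast elim: Ints_cases)
  hence c: "(- 1 gchoose r :: complex) = of_int c"
    by simp
  have "admissible (0 + int (Suc r) * 0) (max 0 1) (\<lambda>a. of_int c * inverse (dF a) ^ Suc r)"
    by (intro admissible.mult admissible.of_int admissible_power admissible.inverse_dF)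
  hence "admissible 0 (1 + r) (\<lambda>a. of_int c * inverse (dF a) ^ Suc r)"
    by (rule admissible.weaken) auto
  thus ?thesis
  proof (rule admissible.eq_on_V)
    fix a assume a: "a \<in> V"
    have "dF a powi (- 1 - int r) = inverse (dF a) ^ Suc r"
      by (simp add: power_int_def nat_add_distrib)
    thus "of_int c * inverse (dF a) ^ Suc r = fps_expansion (\<lambda>v. v powi (-1)) (dF a) $ r"
      by (subst fps_expansion_power_int_nth) (simp_all add: dF_nonzero[OF a] c)
  qed
qed

lemma admissible_taylor_coeff_inverse_dF:
  "admissible (int k * \<gamma> $ i) (k + 1) (taylor_coeff i k (\<lambda>a. inverse (dF a)))"
proof (cases "k = 0")
  case True
  thus ?thesis using admissible.inverse_dF by simp
next
  case False
  have "admissible (0 + int k * \<gamma> $ i) (k + max 1 1) (taylor_coeff i k (\<lambda>b. (\<lambda>v. v powi (-1)) (dF b)))"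
  proof (rule admissible_taylor_coeff_compose[OF slice_analytic_dF])
    show "(\<lambda>v. v powi (-1)) analytic_on {dF a}" if "a \<in> V" for a
      using that dF_nonzero by (auto intro!: analytic_intros)
  qed (use False admissible_taylor_coeff_dF admissible_fps_expansion_inverse_dF_nth in auto)
  thus ?thesis by (simp add: power_int_def)
qed

lemma admissible_taylor_coeff_gcoeff_psi:
  assumes m: "2 \<le> m"
  shows "admissible (int k * \<gamma> $ i) (m + k) (taylor_coeff i k (\<lambda>a. gcoeff m (\<psi> a)))"
proof (cases "k = 0")
  case True
  thus ?thesis using m by (simp add: admissible.gcoeff_psi)
next
  case False
  have "admissible (0 + int k * \<gamma> $ i) (k + max m 0) (taylor_coeff i k (\<lambda>b. gcoeff m (\<psi> b)))"
  proof (rule admissible_taylor_coeff_compose[OF slice_analytic_psi gcoeff_analytic])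
    show "admissible 0 (m + r) (\<lambda>a. fps_expansion (gcoeff m) (\<psi> a) $ r)" for r
      using admissible.mult[OF admissible.of_int[of "int ((m + r) choose r)"]
          admissible.gcoeff_psi[of "m + r"]] m
      by (simp add: fps_expansion_gcoeff_nth)
  qed (use False admissible_taylor_coeff_psi in auto)
  thus ?thesis by (simp add: add.commute)
qed

lemma admissible_taylor_coeff_mult:
  assumes f: "\<And>l. admissible (w1 + int l * \<gamma> $ i) (K1 + l) (taylor_coeff i l f)"
    and h: "\<And>l. admissible (w2 + int l * \<gamma> $ i) (K2 + l) (taylor_coeff i l h)"
    and analytic: "\<And>a. a \<in> V \<Longrightarrow> slice_analytic i f a" "\<And>a. a \<in> V \<Longrightarrow> slice_analytic i h a"
  shows "admissible (w1 + w2 + int k * \<gamma> $ i) (max K1 K2 + k) (taylor_coeff i k (\<lambda>a. f a * h a))"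
proof -
  have "admissible (w1 + w2 + int k * \<gamma> $ i) (max K1 K2 + k)
          (\<lambda>a. \<Sum>l=0..k. taylor_coeff i l f a * taylor_coeff i (k - l) h a)"
  proof (intro admissible_sum)
    fix l assume l: "l \<in> {0..k}"
    from admissible.mult[OF f h]
    show "admissible (w1 + w2 + int k * \<gamma> $ i) (max K1 K2 + k)
            (\<lambda>a. taylor_coeff i l f a * taylor_coeff i (k - l) h a)"
      by (rule admissible.weaken) (use l in \<open>auto simp: of_nat_diff algebra_simps\<close>)
  qed simp
  thus ?thesis
    by (rule admissible.eq_on_V) (simp add: taylor_coeff_mult analytic)
qed

lemma admissible_taylor_coeff:
  "admissible w K f \<Longrightarrow> admissible (w + int k * \<gamma> $ i) (K + k) (taylor_coeff i k f)"
proof (induction arbitrary: k rule: admissible.induct)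
  case (zero w K)
  show ?case
    by (rule admissible.eq_on_V[OF admissible.zero]) (simp add: taylor_coeff_const)
next
  case (of_int c)
  show ?case
  proof (cases "k = 0")
    case True
    thus ?thesis by (simp add: admissible.of_int)
  next
    case False
    thus ?thesis by (intro admissible.eq_on_V[OF admissible.zero]) (simp add: taylor_coeff_const)
  qed
next
  case psi
  show ?case
    using admissible_taylor_coeff_powi_psi[of 1 k i] by simp
next
  case inverse_psi
  show ?case
    using admissible_taylor_coeff_powi_psi[of "-1" k i] by (simp add: power_int_def)
next
  case (coord j)
  show ?case
    using admissible_taylor_coeff_coord by simp
next
  case inverse_dF
  show ?case
    using admissible_taylor_coeff_inverse_dF by (simp add: add.commute)
next
  case (gcoeff_psi m)
  thus ?case
    using admissible_taylor_coeff_gcoeff_psi by simp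
next
  case (add w K f h)
  have "admissible (w + int k * \<gamma> $ i) (K + k) (\<lambda>a. taylor_coeff i k f a + taylor_coeff i k h a)"
    using add.IH by (rule admissible.add)
  thus ?case
    by (rule admissible.eq_on_V)
      (simp add: taylor_coeff_add admissible_slice_analytic[OF add.hyps(1)]
        admissible_slice_analytic[OF add.hyps(2)])
next
  case (mult w1 K1 f w2 K2 h)
  show ?case
    by (rule admissible_taylor_coeff_mult[OF mult.IH])
      (simp_all add: admissible_slice_analytic[OF mult.hyps(1)] admissible_slice_analytic[OF mult.hyps(2)])
next
  case (weaken w K f w' K')
  show ?case
    by (rule admissible.weaken[OF weaken.IH]) (use weaken.hyps in auto)
next
  case (eq_on_V w K f h)
  show ?case
  proof (rule admissible.eq_on_V[OF eq_on_V.IH])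
    fix a assume "a \<in> V"
    show "taylor_coeff i k f a = taylor_coeff i k h a"
      by (rule taylor_coeff_cong[OF open_V \<open>a \<in> V\<close> eq_on_V.hyps(2)])
  qed
qed

lemma foldr_cpartial_zero:
  "(\<And>j. j \<in> set xs \<Longrightarrow> n $ j = 0) \<Longrightarrow> foldr (\<lambda>i h. (cpartial i ^^ (n $ i)) h) xs f = f"
  by (induction xs) auto

lemma admissible_foldr_cpartial:
  fixes n :: "nat^'d"
  assumes "distinct xs" "1 \<le> (\<Sum>i\<in>set xs. n $ i)"
  shows "admissible (\<Sum>i\<in>set xs. int (n $ i) * \<gamma> $ i) (\<Sum>i\<in>set xs. n $ i)
           (\<lambda>a. foldr (\<lambda>i h. (cpartial i ^^ (n $ i)) h) xs \<psi> a / (\<Prod>i\<in>set xs. fact (n $ i)))"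
  using assms
proof (induction xs)
  case (Cons i xs)
  define \<Phi> where "\<Phi> = foldr (\<lambda>i h. (cpartial i ^^ (n $ i)) h) xs \<psi>"
  define P where "P = (\<Prod>j\<in>set xs. fact (n $ j) :: complex)"
  have i: "i \<notin> set xs" "distinct xs"
    using Cons.prems by auto
  have "P \<noteq> 0"
    by (simp add: P_def)
  have foldr_Cons: "foldr (\<lambda>i h. (cpartial i ^^ (n $ i)) h) (i # xs) \<psi> = (cpartial i ^^ (n $ i)) \<Phi>"
    by (simp add: \<Phi>_def)
  show ?case
  proof (cases "(\<Sum>j\<in>set xs. n $ j) = 0")
    case True
    hence "\<forall>j\<in>set xs. n $ j = 0"
      by simp
    hence "\<Phi> = \<psi>" "P = 1" "(\<Sum>j\<in>set xs. int (n $ j) * \<gamma> $ j) = 0"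
      by (simp_all add: \<Phi>_def P_def foldr_cpartial_zero)
    moreover have "1 \<le> n $ i"
      using Cons.prems(2) i(1) True by simp
    ultimately show ?thesis
      using i True admissible_taylor_coeff_psi[of "n $ i" i] unfolding foldr_Cons
      by (simp add: P_def[symmetric] funpow_cpartial)
  next
    case False
    with Cons.IH i have IH: "admissible (\<Sum>j\<in>set xs. int (n $ j) * \<gamma> $ j) (\<Sum>j\<in>set xs. n $ j) (\<lambda>a. \<Phi> a / P)"
      by (simp add: \<Phi>_def P_def)
    from admissible_taylor_coeff[OF IH, of "n $ i" i]
    show ?thesis
    proof (rule admissible.eq_on_V[OF admissible.weaken])
      fix a assume a: "a \<in> V"
      show "taylor_coeff i (n $ i) (\<lambda>a. \<Phi> a / P) a
              = foldr (\<lambda>i h. (cpartial i ^^ (n $ i)) h) (i # xs) \<psi> a / (\<Prod>j\<in>set (i # xs). fact (n $ j))"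
        using funpow_cpartial_div[OF admissible_slice_analytic[OF IH a] \<open>P \<noteq> 0\<close>] i
        unfolding foldr_Cons by (simp add: P_def[symmetric])
    qed (use i in \<open>simp_all add: add.commute\<close>)
  qed
qed simp

lemma admissible_mixed_partial:
  fixes n :: "nat^'d"
  assumes "1 \<le> (\<Sum>i\<in>UNIV. n $ i)"
  shows "admissible (\<Sum>i\<in>UNIV. int (n $ i) * \<gamma> $ i) (\<Sum>i\<in>UNIV. n $ i)
           (\<lambda>a. mixed_partial n \<psi> a / (\<Prod>i\<in>UNIV. fact (n $ i)))"
proof -
  define xs where "xs = (SOME xs. set xs = (UNIV :: 'd set) \<and> distinct xs)"
  have "\<exists>xs. set xs = (UNIV :: 'd set) \<and> distinct xs"
    by (rule finite_distinct_list) simp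
  from someI_ex[OF this] have xs: "set xs = UNIV" "distinct xs"
    unfolding xs_def[symmetric] by simp_all
  show ?thesis
    using admissible_foldr_cpartial[OF xs(2)] assms
    unfolding xs(1) mixed_partial_def xs_def[symmetric] by simp
qed

end

theorem theorem3p4:
  fixes \<gamma> :: "int^'d::finite"
    and g :: "complex \<Rightarrow> complex"
    and \<alpha> :: complex
    and U :: "(complex^'d) set"
    and \<psi> :: "complex^'d \<Rightarrow> complex"
    and n :: "nat^'d"
  assumes g_holo: "g holomorphic_on UNIV"
    and g_zero: "g \<alpha> = 0"
    and alpha_nz: "\<alpha> \<noteq> 0"
    and simple: "deriv g \<alpha> \<noteq> 0"
    and U_open: "open U" and U0: "0 \<in> U"
    and psi_holo: "cholomorphic_on \<psi> U"
    and psi_nz: "\<forall>a\<in>U. \<psi> a \<noteq> 0"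
    and psi_eq: "\<forall>a\<in>U. g (\<psi> a) + (\<Sum>i\<in>UNIV. a $ i * \<psi> a powi (\<gamma> $ i)) = 0"
    and psi0: "\<psi> 0 = \<alpha>"
    and n_pos: "(\<Sum>i\<in>UNIV. n $ i) \<ge> 1"
  shows "\<exists>p \<in> int_poly_vals (\<Sum>i\<in>UNIV. n $ i)
            (\<lambda>j. if j = 0 then inverse \<alpha>
                 else if j = 1 then inverse ((deriv ^^ 1) g \<alpha> / fact 1)
                 else (deriv ^^ j) g \<alpha> / fact j).
           mixed_partial n \<psi> 0 / (\<Prod>i\<in>UNIV. of_nat (fact (n $ i)))
             = \<alpha> powi (\<Sum>i\<in>UNIV. int (n $ i) * \<gamma> $ i) * p"
proof -
  interpret implicit_root \<gamma> g \<alpha> U \<psi>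
    using assms by unfold_locales auto
  obtain p where "p \<in> int_poly_vals (\<Sum>i\<in>UNIV. n $ i) generator"
    "mixed_partial n \<psi> 0 / (\<Prod>i\<in>UNIV. fact (n $ i)) = \<alpha> powi (\<Sum>i\<in>UNIV. int (n $ i) * \<gamma> $ i) * p"
    using admissible_value[OF admissible_mixed_partial[OF n_pos] order_refl] by blast
  moreover have "generator = (\<lambda>j. if j = 0 then inverse \<alpha>
                 else if j = 1 then inverse ((deriv ^^ 1) g \<alpha> / fact 1)
                 else (deriv ^^ j) g \<alpha> / fact j)"
    by (simp add: fun_eq_iff generator_def gcoeff_def)
  ultimately show ?thesis by auto
qed

end
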